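(* For all integers $v\ge w\ge 2$ and $t\ge 2$ with $w\le\lfloor t^2/4\rfloor+t$, we have $v-w+1\le I_t(w,v)\le v$.
   Context: A $(w,v)$ set system is a pair $(\mathcal{X},\mathcal{B})$ with $|\mathcal{X}|=v$ and $\mathcal{B}$ a family of $w$-element subsets (blocks) of $\mathcal{X}$. For a $w$-subset $T\subseteq\mathcal{X}$ let $P_t(T)=\{\mathcal{P}\subseteq\mathcal{B}: |\mathcal{P}|\le t,\ T\subseteq\bigcup_{B\in\mathcal{P}}B\}$. The set system is a $t$-IPPS$(w,v)$ if for every $w$-subset $T\subseteq\mathcal{X}$, either $P_t(T)=\emptyset$ or $\bigcap_{\mathcal{P}\in P_t(T)}\mathcal{P}\neq\emptyset$. $I_t(w,v)$ denotes the maximum of $|\mathcal{B}|$ over all $t$-IPPS$(w,v)$. *)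

theory Defs
  imports Main
begin

definition Pt :: "nat \<Rightarrow> 'a set set \<Rightarrow> 'a set \<Rightarrow> 'a set set set" where
  "Pt t B T = {P. P \<subseteq> B \<and> card P \<le> t \<and> T \<subseteq> \<Union>P}"

definition set_system :: "nat \<Rightarrow> nat \<Rightarrow> 'a set \<Rightarrow> 'a set set \<Rightarrow> bool" where
  "set_system w v X B \<longleftrightarrow> finite X \<and> card X = v \<and> (\<forall>A\<in>B. A \<subseteq> X \<and> card A = w)"

definition is_IPPS :: "nat \<Rightarrow> nat \<Rightarrow> nat \<Rightarrow> 'a set \<Rightarrow> 'a set set \<Rightarrow> bool" where
  "is_IPPS t w v X B \<longleftrightarrow> set_system w v X B \<and>
     (\<forall>T. T \<subseteq> X \<and> card T = w \<longrightarrow> Pt t B T = {} \<or> \<Inter>(Pt t B T) \<noteq> {})"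

text \<open>I_t(w,v): maximum number of blocks of a t-IPPS(w,v). Point sets are taken
  inside nat without loss of generality (any v-set is in bijection with a subset of nat).\<close>
definition I_t :: "nat \<Rightarrow> nat \<Rightarrow> nat \<Rightarrow> nat" where
  "I_t t w v = Max {card B | (X :: nat set) B. is_IPPS t w v X B}"

end

theory Submission
  imports Defs
begin

(*
  Lower bound: all w-sets containing a fixed (w-1)-set K form a t-IPPS for every t, since every
  w-set T has a point x outside K, and K \<union> {x} is the only block through x, hence lies in every
  cover of T.

  Upper bound: subfamilies of a t-IPPS are t-IPPS, so it suffices that every nonempty t-IPPS has a
  block with a private point; deleting such blocks one at a time gives |B| \<le> |\<Union>B| \<le> v.
  Suppose no block has a private point, and let 0 \<le> s < t. Take a block U and a family CC of at
  most s other blocks through points of U, as many as possible, and put F = {U} \<union> CC. For each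
  A \<in> F pick up to t - s points L A of A lying in no other member of F. The points covered twice
  by F, together with all L A, form a set S that is covered by F and, for every A \<in> F, by
  (F - {A}) plus one block other than A through each point of L A. These covers have at most t
  blocks and no common block, whereas counting gives |S| \<ge> w: either S contains a whole member
  of F, or |S| \<ge> s + (s + 1)(t - s) = t + s(t - s). With s = t div 2, s(t - s) = t^2 div 4.
*)

definition private_part :: "'a set set \<Rightarrow> 'a set \<Rightarrow> 'a set" where
  "private_part F A = A - \<Union>(F - {A})"

lemma private_part_subset: "private_part F A \<subseteq> A"
  by (auto simp: private_part_def)

lemma private_part_not_in_other:
  "x \<in> private_part F A \<Longrightarrow> A' \<in> F \<Longrightarrow> A' \<noteq> A \<Longrightarrow> x \<notin> A'"
  by (auto simp: private_part_def)

lemma card_le_card_Union_if_private_parts: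
  assumes "finite (\<Union>F)"
    and "\<And>G. G \<subseteq> F \<Longrightarrow> G \<noteq> {} \<Longrightarrow> \<exists>A\<in>G. private_part G A \<noteq> {}"
  shows "card F \<le> card (\<Union>F)"
proof -
  have "finite F" using assms(1) by (rule finite_UnionD)
  then show ?thesis
    using assms
  proof (induction F rule: finite_psubset_induct)
    case (psubset F)
    show ?case
    proof (cases "F = {}")
      case False
      then obtain A where A: "A \<in> F" and "private_part F A \<noteq> {}"
        using psubset.prems(2) by blast
      then have "\<Union>(F - {A}) \<subset> \<Union>F" by (auto simp: private_part_def)
      then have "card (\<Union>(F - {A})) < card (\<Union>F)"
        using psubset.prems(1) by (rule psubset_card_mono[rotated])
      moreover have "card (F - {A}) \<le> card (\<Union>(F - {A}))"
      proof (rule psubset.IH)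
        show "F - {A} \<subset> F" using A by blast
        show "finite (\<Union>(F - {A}))" using psubset.prems(1) by (rule finite_subset[rotated]) blast
        show "\<exists>A'\<in>G. private_part G A' \<noteq> {}" if "G \<subseteq> F - {A}" "G \<noteq> {}" for G
          using psubset.prems(2) that by blast
      qed
      ultimately show ?thesis using A psubset.hyps by (simp add: card_Diff_singleton)
    qed simp
  qed
qed

lemma card_shared_Un_private_subsets:
  assumes "finite F" "\<And>A. A \<in> F \<Longrightarrow> finite A"
    and "\<And>A. A \<in> F \<Longrightarrow> L A \<subseteq> private_part F A"
  shows "card (\<Union>A\<in>F. (A - private_part F A) \<union> L A)
           = card (\<Union>A\<in>F. A - private_part F A) + (\<Sum>A\<in>F. card (L A))"
proof -
  have L_sub: "L A \<subseteq> A" if "A \<in> F" for A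
    using assms(3)[OF that] private_part_subset by (rule subset_trans)
  have fin_L: "finite (L A)" if "A \<in> F" for A
    using L_sub[OF that] assms(2)[OF that] by (rule finite_subset)
  have owner: "x \<notin> A'" if "A \<in> F" "A' \<in> F" "A' \<noteq> A" "x \<in> L A" for A A' x
  proof -
    have "x \<in> private_part F A" using assms(3)[OF that(1)] that(4) by (rule subsetD)
    then show ?thesis using that(2,3) by (rule private_part_not_in_other)
  qed
  have "card (\<Union>A\<in>F. L A) = (\<Sum>A\<in>F. card (L A))"
  proof (rule card_UN_disjoint)
    show "\<forall>A\<in>F. \<forall>A'\<in>F. A \<noteq> A' \<longrightarrow> L A \<inter> L A' = {}"
    proof (intro ballI impI)
      fix A A' assume "A \<in> F" "A' \<in> F" "A \<noteq> A'"
      then show "L A \<inter> L A' = {}" using owner[of A A'] L_sub[of A'] by blast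
    qed
  qed (use assms(1) fin_L in auto)
  moreover have "(\<Union>A\<in>F. A - private_part F A) \<inter> (\<Union>A\<in>F. L A) = {}"
  proof -
    have "x \<notin> A' - private_part F A'" if "A \<in> F" "A' \<in> F" "x \<in> L A" for A A' x
      using owner[OF that(1,2) _ that(3)] assms(3)[OF that(1)] that(3) by blast
    then show ?thesis by blast
  qed
  moreover have "(\<Union>A\<in>F. (A - private_part F A) \<union> L A)
                   = (\<Union>A\<in>F. A - private_part F A) \<union> (\<Union>A\<in>F. L A)" by blast
  ultimately show ?thesis using assms(1,2) fin_L by (simp add: card_Un_disjoint)
qed

lemma shared_Un_private_subsets_covered:
  assumes "A \<in> F" and "\<And>A'. A' \<in> F \<Longrightarrow> L A' \<subseteq> A'"
  shows "(\<Union>A'\<in>F. (A' - private_part F A') \<union> L A') \<subseteq> \<Union>(F - {A}) \<union> L A"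
proof
  fix y assume "y \<in> (\<Union>A'\<in>F. (A' - private_part F A') \<union> L A')"
  then obtain A' where A': "A' \<in> F" "y \<in> (A' - private_part F A') \<union> L A'" by blast
  show "y \<in> \<Union>(F - {A}) \<union> L A"
  proof (cases "A' = A")
    case True
    then show ?thesis using A' by (auto simp: private_part_def)
  next
    case False
    then show ?thesis using A' assms(2)[OF A'(1)] by blast
  qed
qed

lemma exists_subset_card_eq_or_whole:
  assumes "finite A"
  shows "\<exists>M\<subseteq>A. card M \<le> k \<and> (card M = k \<or> M = A)"
proof (cases "card A \<le> k")
  case False
  then obtain M where "M \<subseteq> A" "card M = k"
    by (metis obtain_subset_with_card_n nat_le_linear)
  then show ?thesis by blast
qed blast

lemma Pt_antimono: "T \<subseteq> T' \<Longrightarrow> Pt t B T' \<subseteq> Pt t B T"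
  by (auto simp: Pt_def)

lemma IPPS_subfamily:
  assumes "is_IPPS t w v X B" and "B' \<subseteq> B"
  shows "is_IPPS t w v X B'"
proof -
  have "set_system w v X B'" using assms unfolding is_IPPS_def set_system_def by blast
  moreover have "Pt t B' T = {} \<or> \<Inter>(Pt t B' T) \<noteq> {}" if "T \<subseteq> X" "card T = w" for T
  proof -
    have sub: "Pt t B' T \<subseteq> Pt t B T" using assms(2) by (auto simp: Pt_def)
    then have "\<Inter>(Pt t B T) \<subseteq> \<Inter>(Pt t B' T)" by blast
    moreover have "Pt t B T = {} \<or> \<Inter>(Pt t B T) \<noteq> {}"
      using assms(1) that unfolding is_IPPS_def by blast
    ultimately show ?thesis using sub by blast
  qed
  ultimately show ?thesis unfolding is_IPPS_def by blast
qed

lemma IPPS_common_block: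
  assumes ipps: "is_IPPS t w v X B" and "S \<subseteq> X" and "w \<le> card S" and "P \<in> Pt t B S"
  shows "\<Inter>(Pt t B S) \<noteq> {}"
proof -
  have "finite S" using ipps \<open>S \<subseteq> X\<close> by (auto simp: is_IPPS_def set_system_def intro: finite_subset)
  then obtain T where T: "T \<subseteq> S" "card T = w"
    using \<open>w \<le> card S\<close> by (metis obtain_subset_with_card_n)
  have PtT: "Pt t B S \<subseteq> Pt t B T" using T(1) by (rule Pt_antimono)
  then have "Pt t B T \<noteq> {}" using \<open>P \<in> Pt t B S\<close> by blast
  moreover have "T \<subseteq> X" using T(1) \<open>S \<subseteq> X\<close> by blast
  ultimately have "\<Inter>(Pt t B T) \<noteq> {}" using ipps T(2) unfolding is_IPPS_def by blast
  then show ?thesis using PtT by blast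
qed

lemma IPPS_shared_Un_private_subsets_card_less:
  assumes ipps: "is_IPPS t w v X B" and F: "F \<subseteq> B" "card F \<le> t"
    and L: "\<And>A. A \<in> F \<Longrightarrow> L A \<subseteq> private_part F A"
    and L_card: "\<And>A. A \<in> F \<Longrightarrow> card (F - {A}) + card (L A) \<le> t"
    and elsewhere: "\<And>A y. A \<in> F \<Longrightarrow> y \<in> L A \<Longrightarrow> \<exists>C\<in>B. C \<noteq> A \<and> y \<in> C"
  shows "card (\<Union>A\<in>F. (A - private_part F A) \<union> L A) < w"
proof (rule ccontr)
  define S where "S = (\<Union>A\<in>F. (A - private_part F A) \<union> L A)"
  assume "\<not> card S < w"
  then have "w \<le> card S" by simp
  obtain h where h: "\<And>A y. A \<in> F \<Longrightarrow> y \<in> L A \<Longrightarrow> h A y \<in> B \<and> h A y \<noteq> A \<and> y \<in> h A y"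
    using elsewhere by metis
  have "finite X" and blocks: "\<And>A. A \<in> B \<Longrightarrow> A \<subseteq> X"
    using ipps by (auto simp: is_IPPS_def set_system_def)
  have L_sub: "\<And>A. A \<in> F \<Longrightarrow> L A \<subseteq> A" using L private_part_subset by (rule subset_trans)
  have S_X: "S \<subseteq> X" using F(1) blocks L_sub by (fastforce simp: S_def)
  have cover_F: "F \<in> Pt t B S" using F L_sub by (auto simp: Pt_def S_def)
  have cover_drop: "(F - {A}) \<union> h A ` L A \<in> Pt t B S" if "A \<in> F" for A
  proof -
    have "finite (L A)"
      using L_sub[OF that] blocks F(1) that \<open>finite X\<close> by (meson finite_subset subsetD)
    then have "card ((F - {A}) \<union> h A ` L A) \<le> card (F - {A}) + card (L A)"
      by (meson add_left_mono card_Un_le card_image_le le_trans)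
    also have "\<dots> \<le> t" using L_card[OF that] .
    finally have "card ((F - {A}) \<union> h A ` L A) \<le> t" .
    moreover have "h A ` L A \<subseteq> B" using h[OF that] by blast
    moreover have "S \<subseteq> \<Union>((F - {A}) \<union> h A ` L A)"
      using shared_Un_private_subsets_covered[OF that L_sub] h[OF that] unfolding S_def by blast
    ultimately show ?thesis using F(1) by (auto simp: Pt_def)
  qed
  obtain D where "D \<in> \<Inter>(Pt t B S)"
    using IPPS_common_block[OF ipps S_X \<open>w \<le> card S\<close> cover_F] by blast
  then have "D \<in> F" and "D \<in> (F - {D}) \<union> h D ` L D" using cover_F cover_drop by blast+
  then show False using h by fastforce
qed

lemma IPPS_private_part_nonempty:
  assumes ipps: "is_IPPS t w v X B" and "s < t" and w_le: "w \<le> t + s * (t - s)"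
    and "B \<noteq> {}"
  shows "\<exists>A\<in>B. private_part B A \<noteq> {}"
proof (rule ccontr)
  assume "\<not> ?thesis"
  then have elsewhere: "\<And>A y. A \<in> B \<Longrightarrow> y \<in> A \<Longrightarrow> \<exists>C\<in>B. C \<noteq> A \<and> y \<in> C"
    unfolding private_part_def by blast
  have "finite X" and blocks: "\<And>A. A \<in> B \<Longrightarrow> A \<subseteq> X \<and> card A = w"
    using ipps by (auto simp: is_IPPS_def set_system_def)
  have fin_block: "\<And>A. A \<in> B \<Longrightarrow> finite A" using blocks \<open>finite X\<close> finite_subset by blast
  obtain U where U: "U \<in> B" using \<open>B \<noteq> {}\<close> by blast
  obtain g where g: "\<And>y. y \<in> U \<Longrightarrow> g y \<in> B \<and> g y \<noteq> U \<and> y \<in> g y"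
    using elsewhere[OF U] by metis
  obtain CC where CC: "CC \<subseteq> g ` U" "card CC \<le> s" "card CC = s \<or> CC = g ` U"
    using exists_subset_card_eq_or_whole[of "g ` U" s] fin_block[OF U] by blast
  define F where "F = insert U CC"
  have "U \<notin> CC" using CC(1) g by fastforce
  have F_sub: "F \<subseteq> B" using CC(1) g U by (auto simp: F_def)
  have fin_F: "finite F" using CC(1) fin_block[OF U] by (auto simp: F_def intro: finite_subset)
  have card_F: "card F = Suc (card CC)" using \<open>U \<notin> CC\<close> fin_F by (simp add: F_def)
  have "\<forall>A\<in>F. \<exists>M\<subseteq>private_part F A. card M \<le> t - s \<and> (card M = t - s \<or> M = private_part F A)"
    using F_sub fin_block by (auto simp: private_part_def intro!: exists_subset_card_eq_or_whole)
  then obtain L where L: "\<And>A. A \<in> F \<Longrightarrow> L A \<subseteq> private_part F A \<and> card (L A) \<le> t - s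
                              \<and> (card (L A) = t - s \<or> L A = private_part F A)"
    by metis
  have L_sub: "\<And>A. A \<in> F \<Longrightarrow> L A \<subseteq> A"
    using L private_part_subset by (meson subset_trans)
  have fin_L: "\<And>A. A \<in> F \<Longrightarrow> finite (L A)"
    using L_sub F_sub fin_block by (meson finite_subset subsetD)
  have "w \<le> card (\<Union>A\<in>F. (A - private_part F A) \<union> L A)" (is "w \<le> card ?S")
  proof (cases "\<exists>A\<in>F. L A = private_part F A")
    case True
    then obtain A where "A \<in> F" "private_part F A \<subseteq> L A" by auto
    then have "A \<subseteq> ?S" by auto
    then have "card A \<le> card ?S" using fin_F F_sub fin_block fin_L by (intro card_mono) auto
    moreover have "card A = w" using blocks \<open>A \<in> F\<close> F_sub by blast
    ultimately show ?thesis by simp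
  next
    case False
    then have full: "\<And>A. A \<in> F \<Longrightarrow> card (L A) = t - s" using L by blast
    have "card CC = s"
    proof (rule ccontr)
      assume "card CC \<noteq> s"
      then have "U \<subseteq> \<Union>CC" using CC(3) g by blast
      then have "private_part F U = {}" by (auto simp: private_part_def F_def \<open>U \<notin> CC\<close>)
      then show False using full[of U] L[of U] \<open>s < t\<close> by (simp add: F_def)
    qed
    have "CC \<subseteq> g ` (U \<inter> \<Union>CC)" using CC(1) g by blast
    then have "s \<le> card (U \<inter> \<Union>CC)"
      using \<open>card CC = s\<close> fin_block[OF U] by (metis finite_Int surj_card_le)
    also have "\<dots> \<le> card (\<Union>A\<in>F. A - private_part F A)"
      using fin_F F_sub fin_block \<open>U \<notin> CC\<close>
      by (intro card_mono) (auto simp: F_def private_part_def)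
    finally have "t + s * (t - s) \<le> card (\<Union>A\<in>F. A - private_part F A) + (\<Sum>A\<in>F. card (L A))"
      using full card_F \<open>card CC = s\<close> \<open>s < t\<close> by (simp add: algebra_simps)
    also have "\<dots> = card ?S"
      using fin_F F_sub fin_block L by (intro card_shared_Un_private_subsets[symmetric]) auto
    finally show ?thesis using w_le by linarith
  qed
  moreover have "card ?S < w"
  proof (rule IPPS_shared_Un_private_subsets_card_less[OF ipps F_sub])
    show "card F \<le> t" using card_F CC(2) \<open>s < t\<close> by simp
    show "L A \<subseteq> private_part F A" if "A \<in> F" for A using L[OF that] by blast
    show "card (F - {A}) + card (L A) \<le> t" if "A \<in> F" for A
      using L[OF that] card_F CC(2) that fin_F \<open>s < t\<close> by auto
    show "\<exists>C\<in>B. C \<noteq> A \<and> y \<in> C" if "A \<in> F" "y \<in> L A" for A y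
      using elsewhere[OF subsetD[OF F_sub that(1)] subsetD[OF L_sub[OF that(1)] that(2)]] .
  qed
  ultimately show False by simp
qed

lemma IPPS_card_le:
  assumes ipps: "is_IPPS t w v X B" and "s < t" and "w \<le> t + s * (t - s)"
  shows "card B \<le> v"
proof -
  have "finite X" "card X = v" and "\<Union>B \<subseteq> X"
    using ipps by (auto simp: is_IPPS_def set_system_def)
  have "card B \<le> card (\<Union>B)"
  proof (rule card_le_card_Union_if_private_parts)
    show "finite (\<Union>B)" using \<open>\<Union>B \<subseteq> X\<close> \<open>finite X\<close> by (rule finite_subset)
    show "\<exists>A\<in>G. private_part G A \<noteq> {}" if "G \<subseteq> B" "G \<noteq> {}" for G
      using IPPS_subfamily[OF ipps that(1)] assms(2,3) that(2) by (rule IPPS_private_part_nonempty)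
  qed
  also have "\<dots> \<le> v" using \<open>\<Union>B \<subseteq> X\<close> \<open>finite X\<close> \<open>card X = v\<close> by (metis card_mono)
  finally show ?thesis .
qed

lemma IPPS_sunflower:
  assumes "finite X" and "K \<subseteq> X" and "card K + 1 = w"
  shows "is_IPPS t w (card X) X ((\<lambda>x. insert x K) ` (X - K))"
  unfolding is_IPPS_def
proof (intro conjI allI impI)
  have "finite K" using assms(2,1) by (rule finite_subset)
  then show "set_system w (card X) X ((\<lambda>x. insert x K) ` (X - K))"
    using assms by (auto simp: set_system_def)
  fix T assume T: "T \<subseteq> X \<and> card T = w"
  have "\<not> T \<subseteq> K"
    using T \<open>finite K\<close> card_mono[of K T] assms(3) by auto
  then obtain x where x: "x \<in> T" "x \<notin> K" by blast
  have "insert x K \<in> P" if P: "P \<in> Pt t ((\<lambda>x. insert x K) ` (X - K)) T" for P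
  proof -
    obtain A where "A \<in> P" "x \<in> A" using P x(1) by (auto simp: Pt_def)
    moreover obtain y where "A = insert y K" using \<open>A \<in> P\<close> P by (auto simp: Pt_def)
    ultimately show ?thesis using x(2) by auto
  qed
  then show "Pt t ((\<lambda>x. insert x K) ` (X - K)) T = {}
             \<or> \<Inter>(Pt t ((\<lambda>x. insert x K) ` (X - K)) T) \<noteq> {}" by blast
qed

lemma card_sunflower:
  assumes "finite X" and "K \<subseteq> X"
  shows "card ((\<lambda>x. insert x K) ` (X - K)) = card X - card K"
proof -
  have "inj_on (\<lambda>x. insert x K) (X - K)" by (rule inj_onI) blast
  then show ?thesis using assms by (simp add: card_image card_Diff_subset finite_subset)
qed

lemma power2_div_4_eq: "(t::nat)\<^sup>2 div 4 = t div 2 * (t - t div 2)"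
proof (cases "even t")
  case True
  then obtain k where "t = 2 * k" by blast
  then show ?thesis by (simp add: power2_eq_square)
next
  case False
  then obtain k where t: "t = 2 * k + 1" using oddE by blast
  then have "t\<^sup>2 = 4 * (k * (k + 1)) + 1" by (simp add: power2_eq_square algebra_simps)
  then show ?thesis using t by simp
qed

theorem corollary3:
  fixes t w v :: nat
  assumes "2 \<le> w" and "w \<le> v" and "2 \<le> t" and "w \<le> t^2 div 4 + t"
  shows "v - w + 1 \<le> I_t t w v \<and> I_t t w v \<le> v"
proof -
  let ?sizes = "{card B | (X :: nat set) B. is_IPPS t w v X B}"
  have "t div 2 < t" and "w \<le> t + t div 2 * (t - t div 2)"
    using assms(3,4) by (simp_all add: power2_div_4_eq)
  then have bounded: "k \<le> v" if "k \<in> ?sizes" for k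
    using that IPPS_card_le by blast
  have "is_IPPS t w v {0..<v} ((\<lambda>x. insert x {0..<w - 1}) ` ({0..<v} - {0..<w - 1}))"
    using IPPS_sunflower[of "{0..<v}" "{0..<w - 1}" w t] assms(1,2) by simp
  moreover have "card ((\<lambda>x. insert x {0..<w - 1}) ` ({0..<v} - {0..<w - 1})) = v - w + 1"
    using card_sunflower[of "{0..<v}" "{0..<w - 1}"] assms(1,2) by simp
  ultimately have mem: "v - w + 1 \<in> ?sizes" by (metis (mono_tags, lifting) mem_Collect_eq)
  have fin: "finite ?sizes" using bounded by (meson finite_atMost finite_subset atMost_iff subsetI)
  have "Max ?sizes \<le> v" using bounded Max_in[OF fin] mem by blast
  then show ?thesis unfolding I_t_def using Max_ge[OF fin mem] by blast
qed

end
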